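(* We have $K_{{\cal Z}_1}({\cal R}^1)=R_{q-1}$, so ${\cal R}^1$ is not exceptional for $K_{{\cal Z}_1}$. In fact for $z_0=\pi_1(0,\lambda,\nu, v)\in {\cal R}^1$, $$K_{{\cal Z}_1}(z)=B\begin{pmatrix}0&0\\ 0& I_{q-1}(v')\end{pmatrix} A$$ where $I_{q-1}$ denotes matrix inversion on ${\cal M}_{q-1}$, and $$v'=\left( {-v_{j,k}\over \lambda_j^2\nu_k^2}\right)_{2\le j,k\le q}, \quad A=\begin{pmatrix} 1 & 0& \cdots &0\\ -\lambda_2^{-1} & 1 & & \\ \vdots & & \ddots & \\ -\lambda_q^{-1} & & & 1\end{pmatrix}, \quad B = \begin{pmatrix} 1 & -\nu_2^{-1}& \cdots &-\nu_q^{-1}\\ 0& 1 & & \\ \vdots & & \ddots & \\ 0 & & & 1\end{pmatrix}.$$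
   Context: ${\cal M}_q$ is the space of complex $q\times q$ matrices, ${\bf P}({\cal M}_q)$ its projectivization. $I(x)=x^{-1}$ is matrix inversion, $J(x)=(1/x_{i,j})$ is entrywise reciprocal, and $K=I\circ J$, a birational map of ${\bf P}({\cal M}_q)$. $R_j$ denotes the set of matrices of rank $\le j$; $R_1$ is the smooth submanifold of rank-one matrices $\lambda\otimes\nu=(\lambda_i\nu_j)$. $\pi_1:{\cal Z}_1\to{\bf P}({\cal M}_q)$ is the blowup along $R_1$, with exceptional hypersurface ${\cal R}^1$, and $K_{{\cal Z}_1}=\pi_1^{-1}\circ K\circ\pi_1$ is the induced birational map. A hypersurface is exceptional if its strict transform has codimension $\ge 2$. Local coordinates: $U_1=\{z\in{\bf C}^q: z_1=1\}$; $V_{k,\ell}$ ($2\le k,\ell\le q$) is the set of matrices whose first row and first column vanish and whose $(k,\ell)$ entry equals $1$; the chart is $\pi_1:{\bf C}\times U_1\times U_1\times V_{k,\ell}\to\{x: x_{1,1}=1\}$, $\pi_1(s,\lambda,\nu,v)=\lambda\otimes\nu+sv$, in which ${\cal R}^1=\{s=0\}$ (after permuting rows/columns one may assume the $(1,1)$ entry is nonzero). *)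

theory Defs
  imports Complex_Main "Jordan_Normal_Form.Determinant"
begin

text \<open>Matrices are Jordan_Normal_Form matrices of dimension q x q; indices run over
  0..q-1, so index 0 plays the role of the paper's index 1.\<close>

text \<open>Matrix inversion I (total, via choice; meaningful for invertible matrices).\<close>
definition minv :: "complex mat \<Rightarrow> complex mat" where
  "minv x = (SOME y. y \<in> carrier_mat (dim_row x) (dim_row x) \<and> inverts_mat x y \<and> inverts_mat y x)"

definition Jmap :: "complex mat \<Rightarrow> complex mat" where
  "Jmap x = mat (dim_row x) (dim_col x) (\<lambda>(i,j). 1 / x $$ (i,j))"

definition Kmap :: "complex mat \<Rightarrow> complex mat" where
  "Kmap x = minv (Jmap x)"

definition tensor :: "complex vec \<Rightarrow> complex vec \<Rightarrow> complex mat" where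
  "tensor l n = mat (dim_vec l) (dim_vec n) (\<lambda>(i,j). l $ i * n $ j)"

text \<open>The blowup chart pi_1(s, lambda, nu, v) = lambda (x) nu + s v.\<close>
definition pi1 :: "complex \<Rightarrow> complex vec \<Rightarrow> complex vec \<Rightarrow> complex mat \<Rightarrow> complex mat" where
  "pi1 s l n v = tensor l n + s \<cdot>\<^sub>m v"

definition vprime :: "nat \<Rightarrow> complex vec \<Rightarrow> complex vec \<Rightarrow> complex mat \<Rightarrow> complex mat" where
  "vprime q l n v = mat (q - 1) (q - 1)
     (\<lambda>(j,k). - v $$ (Suc j, Suc k) / ((l $ Suc j)^2 * (n $ Suc k)^2))"

definition Amat :: "nat \<Rightarrow> complex vec \<Rightarrow> complex mat" where
  "Amat q l = mat q q (\<lambda>(i,j). if i = j then 1 else if j = 0 then - 1 / l $ i else 0)"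

definition Bmat :: "nat \<Rightarrow> complex vec \<Rightarrow> complex mat" where
  "Bmat q n = mat q q (\<lambda>(i,j). if i = j then 1 else if i = 0 then - 1 / n $ j else 0)"

definition KZ1_val :: "nat \<Rightarrow> complex vec \<Rightarrow> complex vec \<Rightarrow> complex mat \<Rightarrow> complex mat" where
  "KZ1_val q l n v = Bmat q n *
     four_block_mat (0\<^sub>m 1 1) (0\<^sub>m 1 (q - 1)) (0\<^sub>m (q - 1) 1) (minv (vprime q l n v))
     * Amat q l"

text \<open>Admissible chart data: lambda, nu in U_1, v in V_{k,l}, plus the genericity
  needed for the formula to make sense (nonzero entries of lambda, nu; v' invertible).\<close>
definition admissible :: "nat \<Rightarrow> complex vec \<Rightarrow> complex vec \<Rightarrow> complex mat \<Rightarrow> nat \<Rightarrow> nat \<Rightarrow> bool" where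
  "admissible q l n v k k' \<longleftrightarrow>
     dim_vec l = q \<and> dim_vec n = q \<and> l $ 0 = 1 \<and> n $ 0 = 1 \<and>
     v \<in> carrier_mat q q \<and> (\<forall>i<q. v $$ (0,i) = 0 \<and> v $$ (i,0) = 0) \<and>
     1 \<le> k \<and> k < q \<and> 1 \<le> k' \<and> k' < q \<and> v $$ (k,k') = 1 \<and>
     (\<forall>i<q. l $ i \<noteq> 0 \<and> n $ i \<noteq> 0) \<and> invertible_mat (vprime q l n v)"

end

theory Submission
  imports Defs
begin

text \<open>In the chart, J(pi_1(s,\<lambda>,\<nu>,v)) has entries 1/(\<lambda>_i \<nu>_j + s v_ij). Since v vanishes on
  the first row and column, right multiplication by B cancels the rank-one part away from the
  first column: J B has first column 1/\<lambda>, first row otherwise zero, and lower block s V(s) with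
  V(0) = v'. Therefore J B diag(s, V(s)^-1) A = s I, i.e.
  s K(pi_1(s,\<lambda>,\<nu>,v)) = B diag(s, V(s)^-1) A, which tends to B diag(0, v'^-1) A, a nonzero
  singular matrix.

  Conversely, if N has kernel spanned by x and cokernel containing w, both without zero entries,
  then with \<lambda>_i = x_1/x_i and \<nu>_j = w_1/w_j the relations N x = 0 and N^T w = 0 say exactly that
  N = B diag(0, M) A, where M is N with first row and column deleted. M is invertible because
  the kernel of N is one-dimensional, so choosing v with v' = c M^-1 exhibits N as c times the
  limit above.\<close>

section \<open>The factors A, B and diag(c, Y)\<close>

lemma index_mult_mat_split_first:
  assumes "A \<in> carrier_mat r (Suc p)" "B \<in> carrier_mat (Suc p) c" "i < r" "j < c"
  shows "(A * B) $$ (i,j) = A $$ (i,0) * B $$ (0,j) + (\<Sum>m<p. A $$ (i,Suc m) * B $$ (Suc m,j))"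
  using assms by (simp add: scalar_prod_def atLeast0LessThan sum.lessThan_Suc_shift del: sum.lessThan_Suc)

lemma index_mult_mat_vec_split_first:
  assumes "A \<in> carrier_mat r (Suc p)" "dim_vec y = Suc p" "i < r"
  shows "(A *\<^sub>v y) $ i = A $$ (i,0) * y $ 0 + (\<Sum>m<p. A $$ (i,Suc m) * y $ Suc m)"
  using assms by (simp add: scalar_prod_def atLeast0LessThan sum.lessThan_Suc_shift del: sum.lessThan_Suc)

lemma first_col_of_mult_mat_vec_zero:
  fixes N :: "complex mat"
  assumes N: "N \<in> carrier_mat r (Suc p)" and x: "dim_vec x = Suc p" "x $ 0 \<noteq> 0"
    and Nx: "N *\<^sub>v x = 0\<^sub>v r" and i: "i < r"
  shows "N $$ (i,0) = - (\<Sum>m<p. N $$ (i,Suc m) * x $ Suc m) / x $ 0"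
proof -
  have "N $$ (i,0) * x $ 0 + (\<Sum>m<p. N $$ (i,Suc m) * x $ Suc m) = 0"
    using index_mult_mat_vec_split_first[OF N x(1) i] Nx i by simp
  with x(2) show ?thesis by (simp add: field_simps add_eq_0_iff)
qed

lemma Amat_carrier [simp]: "Amat q l \<in> carrier_mat q q"
  by (simp add: Amat_def)

lemma Bmat_carrier [simp]: "Bmat q n \<in> carrier_mat q q"
  by (simp add: Bmat_def)

lemma index_Bmat_mult_first_row:
  assumes "X \<in> carrier_mat (Suc p) c" "j < c"
  shows "(Bmat (Suc p) n * X) $$ (0,j) = X $$ (0,j) - (\<Sum>m<p. X $$ (Suc m,j) / n $ Suc m)"
  using assms by (simp add: index_mult_mat_split_first[OF Bmat_carrier assms(1)])
    (simp add: Bmat_def sum_subtractf[symmetric] sum_negf[symmetric] sum.distrib[symmetric] field_simps)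

lemma index_Bmat_mult_Suc_row:
  assumes "X \<in> carrier_mat (Suc p) c" "j < c" "i < p"
  shows "(Bmat (Suc p) n * X) $$ (Suc i,j) = X $$ (Suc i,j)"
  using assms by (simp add: index_mult_mat_split_first[OF Bmat_carrier assms(1)])
    (simp add: Bmat_def if_distrib[where f="\<lambda>x. x * _"] cong: if_cong)

lemma index_mult_Amat_first_col:
  assumes "X \<in> carrier_mat r (Suc p)" "i < r"
  shows "(X * Amat (Suc p) l) $$ (i,0) = X $$ (i,0) - (\<Sum>m<p. X $$ (i,Suc m) / l $ Suc m)"
  using assms by (simp add: index_mult_mat_split_first[OF assms(1) Amat_carrier])
    (simp add: Amat_def sum_subtractf[symmetric] sum_negf[symmetric] sum.distrib[symmetric] field_simps)

lemma index_mult_Amat_Suc_col: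
  assumes "X \<in> carrier_mat r (Suc p)" "i < r" "j < p"
  shows "(X * Amat (Suc p) l) $$ (i,Suc j) = X $$ (i,Suc j)"
  using assms by (simp add: index_mult_mat_split_first[OF assms(1) Amat_carrier])
    (simp add: Amat_def if_distrib[of "\<lambda>x. _ * x"] cong: if_cong)

lemma index_mult_Bmat_first_col:
  assumes "X \<in> carrier_mat r (Suc p)" "i < r"
  shows "(X * Bmat (Suc p) n) $$ (i,0) = X $$ (i,0)"
  using assms by (simp add: index_mult_mat_split_first[OF assms(1) Bmat_carrier]) (simp add: Bmat_def)

lemma index_mult_Bmat_Suc_col:
  assumes "X \<in> carrier_mat r (Suc p)" "i < r" "j < p"
  shows "(X * Bmat (Suc p) n) $$ (i,Suc j) = X $$ (i,Suc j) - X $$ (i,0) / n $ Suc j"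
  using assms by (simp add: index_mult_mat_split_first[OF assms(1) Bmat_carrier])
    (simp add: Bmat_def if_distrib[of "\<lambda>x. _ * x"] cong: if_cong)

definition corner_diag :: "complex \<Rightarrow> complex mat \<Rightarrow> complex mat" where
  "corner_diag c Y = four_block_mat (mat 1 1 (\<lambda>_. c)) (0\<^sub>m 1 (dim_col Y)) (0\<^sub>m (dim_row Y) 1) Y"

lemma dim_corner_diag [simp]:
  "dim_row (corner_diag c Y) = Suc (dim_row Y)" "dim_col (corner_diag c Y) = Suc (dim_col Y)"
  by (simp_all add: corner_diag_def)

lemma corner_diag_carrier [simp]:
  "Y \<in> carrier_mat p p \<Longrightarrow> corner_diag c Y \<in> carrier_mat (Suc p) (Suc p)"
  using four_block_carrier_mat[of "mat 1 1 (\<lambda>_. c)" 1 1 Y p p] by (simp add: corner_diag_def)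

lemma index_corner_diag:
  assumes "Y \<in> carrier_mat p p" "i < Suc p" "j < Suc p"
  shows "corner_diag c Y $$ (i,j) =
    (if i = 0 \<and> j = 0 then c else if i = 0 \<or> j = 0 then 0 else Y $$ (i-1,j-1))"
  using assms by (auto simp: corner_diag_def)

lemma det_corner_diag_zero:
  "Y \<in> carrier_mat p p \<Longrightarrow> det (corner_diag 0 Y) = 0"
  unfolding corner_diag_def
  by (subst det_four_block_mat_lower_left_zero[of _ 1 _ p]) (auto simp: det_single)

lemma KZ1_val_carrier [simp]: "KZ1_val q l n v \<in> carrier_mat q q"
  unfolding KZ1_val_def carrier_mat_def by (simp add: Amat_def Bmat_def)

lemma KZ1_val_eq_corner_diag:
  assumes "minv (vprime (Suc p) l n v) \<in> carrier_mat p p"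
  shows "KZ1_val (Suc p) l n v = Bmat (Suc p) n * corner_diag 0 (minv (vprime (Suc p) l n v)) * Amat (Suc p) l"
  using assms by (simp add: KZ1_val_def corner_diag_def zero_mat_def)

section \<open>Matrix inverses\<close>

lemma minv_eqI:
  assumes F: "F \<in> carrier_mat n n" and Y: "Y \<in> carrier_mat n n" and FY: "F * Y = 1\<^sub>m n"
  shows "minv F = Y"
  unfolding minv_def
proof (rule some_equality)
  have YF: "Y * F = 1\<^sub>m n" by (rule mat_mult_left_right_inverse[OF F Y FY])
  then show "Y \<in> carrier_mat (dim_row F) (dim_row F) \<and> inverts_mat F Y \<and> inverts_mat Y F"
    using F Y FY by (auto simp: inverts_mat_def)
next
  fix Z assume "Z \<in> carrier_mat (dim_row F) (dim_row F) \<and> inverts_mat F Z \<and> inverts_mat Z F"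
  then have Z: "Z \<in> carrier_mat n n" and ZF: "Z * F = 1\<^sub>m n" using F by (auto simp: inverts_mat_def)
  have "Z = Z * (F * Y)" using Z FY by simp
  also have "\<dots> = (Z * F) * Y" using Z F Y by simp
  finally show "Z = Y" using ZF Y by simp
qed

lemma invertible_mat_if_right_inverse:
  fixes F :: "'a :: field mat"
  assumes F: "F \<in> carrier_mat n n" and Y: "Y \<in> carrier_mat n n" and FY: "F * Y = 1\<^sub>m n"
  shows "invertible_mat F"
  using F Y FY mat_mult_left_right_inverse[OF F Y FY]
  unfolding invertible_mat_def inverts_mat_def by auto

lemma minv_invertible:
  assumes F: "F \<in> carrier_mat n n" and inv: "invertible_mat F"
  shows "minv F \<in> carrier_mat n n" "F * minv F = 1\<^sub>m n"
proof -
  obtain Y where FY: "F * Y = 1\<^sub>m (dim_row F)" and YF: "Y * F = 1\<^sub>m (dim_row Y)"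
    using inv unfolding invertible_mat_def inverts_mat_def by blast
  have Y: "Y \<in> carrier_mat n n"
    using arg_cong[OF FY, of dim_col] arg_cong[OF YF, of dim_col] F by auto
  then show "minv F \<in> carrier_mat n n" "F * minv F = 1\<^sub>m n"
    using minv_eqI[OF F Y] FY F by auto
qed

lemma minv_eq_adj_mat:
  assumes F: "F \<in> carrier_mat n n" and d: "det F \<noteq> 0"
  shows "minv F = (1 / det F) \<cdot>\<^sub>m adj_mat F"
proof (rule minv_eqI[OF F])
  show "(1 / det F) \<cdot>\<^sub>m adj_mat F \<in> carrier_mat n n" using adj_mat(1)[OF F] by simp
  show "F * ((1 / det F) \<cdot>\<^sub>m adj_mat F) = 1\<^sub>m n"
    using mult_smult_distrib[OF F adj_mat(1)[OF F]] adj_mat(2)[OF F] d by (auto intro!: eq_matI)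
qed

lemma inverse_has_nonzero_entry:
  fixes F :: "'a :: field mat"
  assumes F: "F \<in> carrier_mat n n" and Y: "Y \<in> carrier_mat n n" and FY: "F * Y = 1\<^sub>m n"
    and n: "n > 0"
  obtains a b where "a < n" "b < n" "Y $$ (a,b) \<noteq> 0"
proof (rule ccontr)
  assume "\<not> thesis"
  with that have "\<And>a b. a < n \<Longrightarrow> b < n \<Longrightarrow> Y $$ (a,b) = 0" by blast
  then have "Y = 0\<^sub>m n n" using Y by (auto intro!: eq_matI)
  then have "(1\<^sub>m n :: 'a mat) = 0\<^sub>m n n" using FY right_mult_zero_mat[OF F] by simp
  then have "(1\<^sub>m n :: 'a mat) $$ (0,0) = 0\<^sub>m n n $$ (0,0)" by simp
  with n show False by simp
qed

section \<open>Entrywise convergence of matrices\<close>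

definition mat_tendsto :: "('b \<Rightarrow> 'a :: topological_space mat) \<Rightarrow> 'a mat \<Rightarrow> 'b filter \<Rightarrow> bool" where
  "mat_tendsto F F0 net \<longleftrightarrow>
     (\<forall>i<dim_row F0. \<forall>j<dim_col F0. ((\<lambda>s. F s $$ (i,j)) \<longlongrightarrow> F0 $$ (i,j)) net)"

lemma mat_tendstoD:
  "mat_tendsto F F0 net \<Longrightarrow> i < dim_row F0 \<Longrightarrow> j < dim_col F0 \<Longrightarrow>
     ((\<lambda>s. F s $$ (i,j)) \<longlongrightarrow> F0 $$ (i,j)) net"
  by (simp add: mat_tendsto_def)

lemma tendsto_det:
  fixes F :: "'b \<Rightarrow> 'a :: real_normed_field mat"
  assumes F: "\<And>s. F s \<in> carrier_mat n n" and F0: "F0 \<in> carrier_mat n n"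
    and lim: "mat_tendsto F F0 net"
  shows "((\<lambda>s. det (F s)) \<longlongrightarrow> det F0) net"
  unfolding det_def'[OF F] det_def'[OF F0]
proof (intro tendsto_sum tendsto_mult tendsto_const tendsto_prod)
  fix p i assume "p \<in> {p. p permutes {0..<n}}" "i \<in> {0..<n}"
  then have "i < n" "p i < n" using permutes_in_image by fastforce+
  then show "((\<lambda>s. F s $$ (i, p i)) \<longlongrightarrow> F0 $$ (i, p i)) net"
    using mat_tendstoD[OF lim] F0 by simp
qed

lemma mat_tendsto_mat_delete:
  assumes F: "\<And>s. F s \<in> carrier_mat n m" and F0: "F0 \<in> carrier_mat n m"
    and lim: "mat_tendsto F F0 net"
  shows "mat_tendsto (\<lambda>s. mat_delete (F s) i j) (mat_delete F0 i j) net"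
  unfolding mat_tendsto_def
proof (intro allI impI)
  fix a b assume "a < dim_row (mat_delete F0 i j)" "b < dim_col (mat_delete F0 i j)"
  moreover have "dim_row (F s) = n" "dim_col (F s) = m" for s using F[of s] by auto
  ultimately show "((\<lambda>s. mat_delete (F s) i j $$ (a, b)) \<longlongrightarrow> mat_delete F0 i j $$ (a, b)) net"
    using F F0 mat_tendstoD[OF lim, of "if a < i then a else Suc a" "if b < j then b else Suc b"]
    by (cases "a < i"; cases "b < j") (auto simp: mat_delete_def)
qed

lemma mat_tendsto_adj_mat:
  fixes F :: "'b \<Rightarrow> 'a :: real_normed_field mat"
  assumes F: "\<And>s. F s \<in> carrier_mat n n" and F0: "F0 \<in> carrier_mat n n"
    and lim: "mat_tendsto F F0 net"
  shows "mat_tendsto (\<lambda>s. adj_mat (F s)) (adj_mat F0) net"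
  unfolding mat_tendsto_def
proof (intro allI impI)
  fix i j assume "i < dim_row (adj_mat F0)" "j < dim_col (adj_mat F0)"
  then have ij: "i < n" "j < n" using adj_mat(1)[OF F0] by auto
  have "((\<lambda>s. det (mat_delete (F s) j i)) \<longlongrightarrow> det (mat_delete F0 j i)) net"
    using mat_delete_carrier F F0 by (intro tendsto_det mat_tendsto_mat_delete[OF F F0 lim]) blast+
  moreover have "dim_row (F s) = n" "dim_col (F s) = n" for s using F[of s] by auto
  ultimately show "((\<lambda>s. adj_mat (F s) $$ (i, j)) \<longlongrightarrow> adj_mat F0 $$ (i, j)) net"
    using ij F F0 by (simp add: adj_mat_def cofactor_def carrier_matD tendsto_mult_left)
qed

lemma mat_tendsto_smult:
  fixes F :: "'b \<Rightarrow> 'a :: real_normed_field mat"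
  assumes "\<And>s. F s \<in> carrier_mat n m" "F0 \<in> carrier_mat n m"
    and "(f \<longlongrightarrow> c) net" "mat_tendsto F F0 net"
  shows "mat_tendsto (\<lambda>s. f s \<cdot>\<^sub>m F s) (c \<cdot>\<^sub>m F0) net"
proof -
  have "(f s \<cdot>\<^sub>m F s) $$ (i,j) = f s * F s $$ (i,j)" if "i < n" "j < m" for s i j
    using assms(1)[of s] that by simp
  then show ?thesis using assms unfolding mat_tendsto_def by (auto intro!: tendsto_mult)
qed

lemma mat_tendsto_mult:
  fixes F :: "'b \<Rightarrow> 'a :: real_normed_field mat"
  assumes F: "\<And>s. F s \<in> carrier_mat n m" and F0: "F0 \<in> carrier_mat n m"
    and G: "\<And>s. G s \<in> carrier_mat m r" and G0: "G0 \<in> carrier_mat m r"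
    and limF: "mat_tendsto F F0 net" and limG: "mat_tendsto G G0 net"
  shows "mat_tendsto (\<lambda>s. F s * G s) (F0 * G0) net"
  unfolding mat_tendsto_def
proof (intro allI impI)
  fix i j assume "i < dim_row (F0 * G0)" "j < dim_col (F0 * G0)"
  then have ij: "i < n" "j < r" using F0 G0 by auto
  have entry: "(H * K) $$ (i,j) = (\<Sum>k=0..<m. H $$ (i,k) * K $$ (k,j))"
    if "H \<in> carrier_mat n m" "K \<in> carrier_mat m r" for H K :: "'a mat"
    using that ij by (simp add: scalar_prod_def)
  show "((\<lambda>s. (F s * G s) $$ (i, j)) \<longlongrightarrow> (F0 * G0) $$ (i, j)) net"
    unfolding entry[OF F G] entry[OF F0 G0]
    using ij F0 G0 by (intro tendsto_sum tendsto_mult mat_tendstoD[OF limF] mat_tendstoD[OF limG]) auto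
qed

lemma mat_tendsto_const: "mat_tendsto (\<lambda>_. A) A net"
  by (simp add: mat_tendsto_def)

lemma mat_tendsto_corner_diag:
  assumes Y: "\<And>s. Y s \<in> carrier_mat p p" and Y0: "Y0 \<in> carrier_mat p p"
    and "(f \<longlongrightarrow> c) net" and "mat_tendsto Y Y0 net"
  shows "mat_tendsto (\<lambda>s. corner_diag (f s) (Y s)) (corner_diag c Y0) net"
  unfolding mat_tendsto_def
proof (intro allI impI)
  fix i j assume "i < dim_row (corner_diag c Y0)" "j < dim_col (corner_diag c Y0)"
  then have ij: "i < Suc p" "j < Suc p" using corner_diag_carrier[OF Y0, of c] by auto
  then show "((\<lambda>s. corner_diag (f s) (Y s) $$ (i, j)) \<longlongrightarrow> corner_diag c Y0 $$ (i, j)) net"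
    using assms(3) mat_tendstoD[OF assms(4), of "i-1" "j-1"] Y0
    by (simp add: index_corner_diag[OF Y ij] index_corner_diag[OF Y0 ij])
qed

section \<open>The chart near the exceptional divisor\<close>

text \<open>The lower block of J(pi_1(s,\<lambda>,\<nu>,v)) B divided by s; at s = 0 it is v'.\<close>
definition vprime_family :: "nat \<Rightarrow> complex vec \<Rightarrow> complex vec \<Rightarrow> complex mat \<Rightarrow> complex \<Rightarrow> complex mat" where
  "vprime_family q l n v s = mat (q - 1) (q - 1) (\<lambda>(a,b).
     - v $$ (Suc a, Suc b) / (l $ Suc a * n $ Suc b * (l $ Suc a * n $ Suc b + s * v $$ (Suc a, Suc b))))"

lemma vprime_family_carrier [simp]: "vprime_family q l n v s \<in> carrier_mat (q - 1) (q - 1)"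
  by (simp add: vprime_family_def)

lemma vprime_family_zero: "vprime_family q l n v 0 = vprime q l n v"
  by (rule eq_matI) (simp_all add: vprime_family_def vprime_def power2_eq_square mult_ac)

lemma mat_tendsto_vprime_family:
  assumes "admissible q l n v k k'"
  shows "mat_tendsto (vprime_family q l n v) (vprime q l n v) (at 0)"
  unfolding mat_tendsto_def vprime_family_zero[symmetric]
proof (intro allI impI)
  fix a b assume "a < dim_row (vprime_family q l n v 0)" "b < dim_col (vprime_family q l n v 0)"
  then have "l $ Suc a * n $ Suc b \<noteq> 0" using assms by (auto simp: admissible_def vprime_family_def)
  with \<open>a < _\<close> \<open>b < _\<close> show "((\<lambda>s. vprime_family q l n v s $$ (a, b)) \<longlongrightarrow> vprime_family q l n v 0 $$ (a, b)) (at 0)"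
    by (simp add: vprime_family_def) (auto intro!: tendsto_eq_intros)
qed

lemma Jmap_pi1_carrier [simp]:
  "admissible q l n v k k' \<Longrightarrow> Jmap (pi1 s l n v) \<in> carrier_mat q q"
  by (auto simp: admissible_def Jmap_def pi1_def tensor_def)

lemma index_Jmap_pi1:
  "admissible q l n v k k' \<Longrightarrow> i < q \<Longrightarrow> j < q \<Longrightarrow>
     Jmap (pi1 s l n v) $$ (i,j) = 1 / (l $ i * n $ j + s * v $$ (i,j))"
  by (auto simp: admissible_def Jmap_def pi1_def tensor_def)

lemma Jmap_pi1_mult_Bmat:
  assumes adm: "admissible (Suc p) l n v k k'"
    and den: "\<And>i j. i < Suc p \<Longrightarrow> j < Suc p \<Longrightarrow> l $ i * n $ j + s * v $$ (i,j) \<noteq> 0"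
  defines "C \<equiv> Jmap (pi1 s l n v) * Bmat (Suc p) n"
  shows "\<And>i. i < Suc p \<Longrightarrow> C $$ (i,0) = 1 / l $ i"
    and "\<And>b. b < p \<Longrightarrow> C $$ (0,Suc b) = 0"
    and "\<And>a b. a < p \<Longrightarrow> b < p \<Longrightarrow> C $$ (Suc a,Suc b) = s * vprime_family (Suc p) l n v s $$ (a,b)"
proof -
  note J = Jmap_pi1_carrier[OF adm] and Je = index_Jmap_pi1[OF adm]
  from adm have l0: "l $ 0 = 1" and n0: "n $ 0 = 1"
    and v0: "\<And>i. i < Suc p \<Longrightarrow> v $$ (0,i) = 0 \<and> v $$ (i,0) = 0"
    and nz: "\<And>i. i < Suc p \<Longrightarrow> l $ i \<noteq> 0 \<and> n $ i \<noteq> 0"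
    unfolding admissible_def by auto
  show "C $$ (i,0) = 1 / l $ i" if "i < Suc p" for i
    unfolding C_def using that v0[OF that] n0 by (simp add: index_mult_Bmat_first_col[OF J] Je)
  show "C $$ (0,Suc b) = 0" if "b < p" for b
    unfolding C_def using that v0[of "Suc b"] v0[of 0] n0 l0 nz[of "Suc b"]
    by (simp add: index_mult_Bmat_Suc_col[OF J] Je)
  show "C $$ (Suc a,Suc b) = s * vprime_family (Suc p) l n v s $$ (a,b)" if "a < p" "b < p" for a b
    unfolding C_def using that v0[of "Suc a"] n0 nz[of "Suc a"] nz[of "Suc b"] den[of "Suc a" "Suc b"]
    by (simp add: index_mult_Bmat_Suc_col[OF J] Je vprime_family_def field_simps)
qed

lemma mult_corner_diag_mult_Amat:
  assumes C: "C \<in> carrier_mat (Suc p) (Suc p)" and V: "V \<in> carrier_mat p p"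
    and W: "W \<in> carrier_mat p p" and VW: "V * W = 1\<^sub>m p" and l0: "l $ 0 = 1"
    and C0: "\<And>i. i < Suc p \<Longrightarrow> C $$ (i,0) = 1 / l $ i"
    and C0S: "\<And>b. b < p \<Longrightarrow> C $$ (0,Suc b) = 0"
    and CSS: "\<And>a b. a < p \<Longrightarrow> b < p \<Longrightarrow> C $$ (Suc a,Suc b) = s * V $$ (a,b)"
  shows "C * corner_diag s W * Amat (Suc p) l = s \<cdot>\<^sub>m 1\<^sub>m (Suc p)"
proof -
  define D where "D = C * corner_diag s W"
  have D: "D \<in> carrier_mat (Suc p) (Suc p)" unfolding D_def using C W by simp
  have entry: "D $$ (i,j) = C $$ (i,0) * corner_diag s W $$ (0,j)
      + (\<Sum>m<p. C $$ (i,Suc m) * corner_diag s W $$ (Suc m,j))" if "i < Suc p" "j < Suc p" for i j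
    unfolding D_def using that by (rule index_mult_mat_split_first[OF C corner_diag_carrier[OF W]])
  have D0: "D $$ (i,0) = s / l $ i" if "i < Suc p" for i
    using that W by (simp add: entry index_corner_diag C0)
  have D0S: "D $$ (0,Suc b) = 0" if "b < p" for b
    using that W by (simp add: entry index_corner_diag C0S)
  have DSS: "D $$ (Suc a,Suc b) = (if a = b then s else 0)" if "a < p" "b < p" for a b
  proof -
    have "D $$ (Suc a,Suc b) = s * (V * W) $$ (a,b)"
      using that V W
      by (simp add: entry index_corner_diag CSS scalar_prod_def atLeast0LessThan sum_distrib_left mult_ac)
    with VW that show ?thesis by simp
  qed
  show ?thesis
    unfolding D_def[symmetric]
  proof (rule eq_matI)
    fix i j assume "i < dim_row (s \<cdot>\<^sub>m 1\<^sub>m (Suc p))" "j < dim_col (s \<cdot>\<^sub>m 1\<^sub>m (Suc p))"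
    then have i: "i < Suc p" and j: "j < Suc p" by auto
    show "(D * Amat (Suc p) l) $$ (i, j) = (s \<cdot>\<^sub>m 1\<^sub>m (Suc p)) $$ (i, j)"
    proof (cases j)
      case 0
      then show ?thesis using i l0
        by (cases i) (simp_all add: index_mult_Amat_first_col[OF D] D0 D0S DSS
            if_distrib[of "\<lambda>x. x / _"] cong: if_cong)
    next
      case (Suc b)
      then show ?thesis using i j
        by (cases i) (simp_all add: index_mult_Amat_Suc_col[OF D] D0S DSS)
    qed
  qed (use D in \<open>auto simp: Amat_def\<close>)
qed

lemma Kmap_pi1_eq:
  assumes adm: "admissible (Suc p) l n v k k'" and s: "s \<noteq> 0"
    and den: "\<And>i j. i < Suc p \<Longrightarrow> j < Suc p \<Longrightarrow> l $ i * n $ j + s * v $$ (i,j) \<noteq> 0"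
    and dV: "det (vprime_family (Suc p) l n v s) \<noteq> 0"
  defines "V \<equiv> vprime_family (Suc p) l n v s"
  defines "G \<equiv> Bmat (Suc p) n * corner_diag s ((1 / det V) \<cdot>\<^sub>m adj_mat V) * Amat (Suc p) l"
  shows "invertible_mat (Jmap (pi1 s l n v))" and "Kmap (pi1 s l n v) = (1 / s) \<cdot>\<^sub>m G"
proof -
  note J = Jmap_pi1_carrier[OF adm, of s]
  have V: "V \<in> carrier_mat p p" unfolding V_def using vprime_family_carrier[of "Suc p"] by simp
  define W where "W = (1 / det V) \<cdot>\<^sub>m adj_mat V"
  have W: "W \<in> carrier_mat p p" unfolding W_def using adj_mat(1)[OF V] by simp
  have VW: "V * W = 1\<^sub>m p"
    unfolding W_def using mult_smult_distrib[OF V adj_mat(1)[OF V]] adj_mat(2)[OF V] dV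
    by (auto simp: V_def intro!: eq_matI)
  have "Jmap (pi1 s l n v) * G = (Jmap (pi1 s l n v) * Bmat (Suc p) n) * corner_diag s W * Amat (Suc p) l"
    unfolding G_def W_def[symmetric]
    using assoc_mult_mat[OF J mult_carrier_mat[OF Bmat_carrier corner_diag_carrier[OF W]] Amat_carrier]
      assoc_mult_mat[OF J Bmat_carrier corner_diag_carrier[OF W]]
    by metis
  also have "\<dots> = s \<cdot>\<^sub>m 1\<^sub>m (Suc p)"
    using Jmap_pi1_mult_Bmat[OF adm den] adm J V W VW
    by (intro mult_corner_diag_mult_Amat) (auto simp: admissible_def V_def)
  finally have "Jmap (pi1 s l n v) * G = s \<cdot>\<^sub>m 1\<^sub>m (Suc p)" .
  moreover have G: "G \<in> carrier_mat (Suc p) (Suc p)" unfolding G_def W_def[symmetric]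
    using mult_carrier_mat[OF mult_carrier_mat[OF Bmat_carrier corner_diag_carrier[OF W]] Amat_carrier] .
  ultimately have JG: "Jmap (pi1 s l n v) * ((1 / s) \<cdot>\<^sub>m G) = 1\<^sub>m (Suc p)"
    using mult_smult_distrib[OF J G] s by (auto intro!: eq_matI)
  have G: "(1 / s) \<cdot>\<^sub>m G \<in> carrier_mat (Suc p) (Suc p)" using G by simp
  show "invertible_mat (Jmap (pi1 s l n v))" by (rule invertible_mat_if_right_inverse[OF J G JG])
  show "Kmap (pi1 s l n v) = (1 / s) \<cdot>\<^sub>m G" unfolding Kmap_def by (rule minv_eqI[OF J G JG])
qed

lemma admissible_vprime_inverse:
  assumes "admissible q l n v k k'"
  shows "minv (vprime q l n v) \<in> carrier_mat (q - 1) (q - 1)"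
    and "vprime q l n v * minv (vprime q l n v) = 1\<^sub>m (q - 1)"
    and "det (vprime q l n v) \<noteq> 0"
proof -
  have vp: "vprime q l n v \<in> carrier_mat (q - 1) (q - 1)" by (simp add: vprime_def)
  have "invertible_mat (vprime q l n v)" using assms by (simp add: admissible_def)
  note inv = minv_invertible[OF vp this]
  then show "minv (vprime q l n v) \<in> carrier_mat (q - 1) (q - 1)"
    and "vprime q l n v * minv (vprime q l n v) = 1\<^sub>m (q - 1)" by auto
  show "det (vprime q l n v) \<noteq> 0" using det_mult[OF vp inv(1)] inv(2) by auto
qed

lemma eventually_chart_regular:
  assumes adm: "admissible q l n v k k'"
  shows "\<forall>\<^sub>F s in at 0. s \<noteq> 0 \<and> (\<forall>i<q. \<forall>j<q. l $ i * n $ j + s * v $$ (i,j) \<noteq> 0)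
           \<and> det (vprime_family q l n v s) \<noteq> 0"
proof -
  have "\<forall>\<^sub>F s in at 0. \<forall>i\<in>{..<q}. \<forall>j\<in>{..<q}. l $ i * n $ j + s * v $$ (i,j) \<noteq> 0"
  proof (intro eventually_ball_finite ballI finite_lessThan)
    fix i j assume "i \<in> {..<q}" "j \<in> {..<q}"
    then have "l $ i * n $ j + 0 * v $$ (i,j) \<noteq> 0" using adm by (simp add: admissible_def)
    moreover have "((\<lambda>s. l $ i * n $ j + s * v $$ (i,j)) \<longlongrightarrow> l $ i * n $ j + 0 * v $$ (i,j)) (at 0)"
      by (intro tendsto_intros)
    ultimately show "\<forall>\<^sub>F s in at 0. l $ i * n $ j + s * v $$ (i,j) \<noteq> 0"
      using tendsto_imp_eventually_ne by blast
  qed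
  moreover have "((\<lambda>s. det (vprime_family q l n v s)) \<longlongrightarrow> det (vprime q l n v)) (at 0)"
    by (rule tendsto_det[OF vprime_family_carrier _ mat_tendsto_vprime_family[OF adm]]) (simp add: vprime_def)
  then have "\<forall>\<^sub>F s in at 0. det (vprime_family q l n v s) \<noteq> 0"
    using admissible_vprime_inverse(3)[OF adm] by (rule tendsto_imp_eventually_ne)
  moreover have "\<forall>\<^sub>F s in at 0. s \<noteq> (0::complex)" by (simp add: eventually_at_filter)
  ultimately show ?thesis by eventually_elim auto
qed

lemma tendsto_smult_Kmap_pi1:
  assumes adm: "admissible (Suc p) l n v k k'"
    and ij: "i < Suc p" "j < Suc p"
  shows "((\<lambda>s. s * Kmap (pi1 s l n v) $$ (i,j)) \<longlongrightarrow> KZ1_val (Suc p) l n v $$ (i,j)) (at 0)"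
proof -
  define V where "V = vprime_family (Suc p) l n v"
  \<comment> \<open>V(s)^-1 through the adjugate: defined for every s, and continuous where det V(s) \<noteq> 0\<close>
  define W where "W s = (1 / det (V s)) \<cdot>\<^sub>m adj_mat (V s)" for s
  define Y where "Y = minv (vprime (Suc p) l n v)"
  define G where "G s = Bmat (Suc p) n * corner_diag s (W s) * Amat (Suc p) l" for s
  have V: "V s \<in> carrier_mat p p" for s unfolding V_def using vprime_family_carrier[of "Suc p"] by simp
  have W: "W s \<in> carrier_mat p p" for s unfolding W_def using adj_mat(1)[OF V] by simp
  have vp: "vprime (Suc p) l n v \<in> carrier_mat p p" by (simp add: vprime_def)
  have Y: "Y \<in> carrier_mat p p" unfolding Y_def using admissible_vprime_inverse(1)[OF adm] by simp
  have "mat_tendsto W Y (at 0)"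
    unfolding W_def Y_def minv_eq_adj_mat[OF vp admissible_vprime_inverse(3)[OF adm]]
    using V vp adj_mat(1)[OF V] adj_mat(1)[OF vp] admissible_vprime_inverse(3)[OF adm]
      mat_tendsto_vprime_family[OF adm, folded V_def]
    by (intro mat_tendsto_smult mat_tendsto_adj_mat tendsto_intros tendsto_det[OF V vp]) auto
  then have "mat_tendsto (\<lambda>s. corner_diag s (W s)) (corner_diag 0 Y) (at 0)"
    by (intro mat_tendsto_corner_diag[OF W Y] tendsto_ident_at)
  then have "mat_tendsto (\<lambda>s. Bmat (Suc p) n * corner_diag s (W s)) (Bmat (Suc p) n * corner_diag 0 Y) (at 0)"
    by (intro mat_tendsto_mult[OF Bmat_carrier Bmat_carrier corner_diag_carrier[OF W] corner_diag_carrier[OF Y]]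
        mat_tendsto_const)
  then have lim: "mat_tendsto G (KZ1_val (Suc p) l n v) (at 0)"
    unfolding KZ1_val_eq_corner_diag[OF Y[unfolded Y_def]] Y_def[symmetric] G_def
    using mult_carrier_mat[OF Bmat_carrier corner_diag_carrier[OF W]]
      mult_carrier_mat[OF Bmat_carrier corner_diag_carrier[OF Y]]
    by (intro mat_tendsto_mult[OF _ _ Amat_carrier Amat_carrier] mat_tendsto_const)
  have G: "G s \<in> carrier_mat (Suc p) (Suc p)" for s
    unfolding G_def using mult_carrier_mat[OF mult_carrier_mat[OF Bmat_carrier corner_diag_carrier[OF W]] Amat_carrier] .
  have "\<forall>\<^sub>F s in at 0. G s $$ (i,j) = s * Kmap (pi1 s l n v) $$ (i,j)"
    using eventually_chart_regular[OF adm]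
  proof eventually_elim
    case (elim s)
    then have "Kmap (pi1 s l n v) = (1 / s) \<cdot>\<^sub>m G s"
      by (auto simp: Kmap_pi1_eq(2)[OF adm] G_def W_def V_def)
    with elim G[of s] ij show ?case by simp
  qed
  moreover have "(\<lambda>s. G s $$ (i,j)) \<midarrow>0\<rightarrow> KZ1_val (Suc p) l n v $$ (i,j)"
    using mat_tendstoD[OF lim] ij by (simp add: carrier_matD[OF KZ1_val_carrier])
  ultimately show ?thesis by (rule Lim_transform_eventually[rotated])
qed

lemma index_KZ1_val_Suc_Suc:
  assumes adm: "admissible (Suc p) l n v k k'" and ab: "a < p" "b < p"
  shows "KZ1_val (Suc p) l n v $$ (Suc a, Suc b) = minv (vprime (Suc p) l n v) $$ (a,b)"
proof -
  have Y: "minv (vprime (Suc p) l n v) \<in> carrier_mat p p"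
    using admissible_vprime_inverse(1)[OF adm] by simp
  note X = corner_diag_carrier[OF Y, of 0]
  show ?thesis unfolding KZ1_val_eq_corner_diag[OF Y]
    using ab Y by (simp add: index_mult_Amat_Suc_col[OF mult_carrier_mat[OF Bmat_carrier X]]
        index_Bmat_mult_Suc_row[OF X] index_corner_diag)
qed

lemma KZ1_val_nonzero:
  assumes adm: "admissible (Suc p) l n v k k'" and p: "p \<ge> 1"
  shows "KZ1_val (Suc p) l n v \<noteq> 0\<^sub>m (Suc p) (Suc p)"
proof -
  have vp: "vprime (Suc p) l n v \<in> carrier_mat p p" by (simp add: vprime_def)
  obtain a b where ab: "a < p" "b < p" "minv (vprime (Suc p) l n v) $$ (a,b) \<noteq> 0"
    using inverse_has_nonzero_entry[OF vp _ _ ] admissible_vprime_inverse[OF adm] p by auto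
  then show ?thesis using index_KZ1_val_Suc_Suc[OF adm ab(1,2)] by auto
qed

lemma det_KZ1_val:
  assumes adm: "admissible (Suc p) l n v k k'"
  shows "det (KZ1_val (Suc p) l n v) = 0"
proof -
  have Y: "minv (vprime (Suc p) l n v) \<in> carrier_mat p p"
    using admissible_vprime_inverse(1)[OF adm] by simp
  note X = corner_diag_carrier[OF Y, of 0]
  show ?thesis unfolding KZ1_val_eq_corner_diag[OF Y]
    by (simp add: det_mult[OF mult_carrier_mat[OF Bmat_carrier X] Amat_carrier]
        det_mult[OF Bmat_carrier X] det_corner_diag_zero[OF Y])
qed

section \<open>Matrices with one-dimensional kernel and cokernel\<close>

lemma factor_through_corner_diag:
  fixes N :: "complex mat"
  assumes N: "N \<in> carrier_mat (Suc p) (Suc p)"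
    and x: "dim_vec x = Suc p" "x $ 0 \<noteq> 0" "N *\<^sub>v x = 0\<^sub>v (Suc p)"
    and w: "dim_vec w = Suc p" "w $ 0 \<noteq> 0" "transpose_mat N *\<^sub>v w = 0\<^sub>v (Suc p)"
  shows "N = Bmat (Suc p) (vec (Suc p) (\<lambda>i. w $ 0 / w $ i)) * corner_diag 0 (mat_delete N 0 0)
           * Amat (Suc p) (vec (Suc p) (\<lambda>i. x $ 0 / x $ i))"
proof -
  define M where "M = mat_delete N 0 0"
  define P where "P = Bmat (Suc p) (vec (Suc p) (\<lambda>i. w $ 0 / w $ i)) * corner_diag 0 M"
  have M: "M \<in> carrier_mat p p" unfolding M_def using mat_delete_carrier[OF N] by simp
  have P: "P \<in> carrier_mat (Suc p) (Suc p)"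
    unfolding P_def using mult_carrier_mat[OF Bmat_carrier corner_diag_carrier[OF M]] .
  note X = corner_diag_carrier[OF M, of 0]
  have MN: "M $$ (a,b) = N $$ (Suc a, Suc b)" if "a < p" "b < p" for a b
    using that N by (simp add: M_def mat_delete_def)
  have col: "N $$ (0,j) = - (\<Sum>m<p. N $$ (Suc m,j) * w $ Suc m) / w $ 0" if "j < Suc p" for j
    using first_col_of_mult_mat_vec_zero[of "transpose_mat N" "Suc p" p w j] N w that by simp
  have row: "N $$ (i,0) = - (\<Sum>m<p. N $$ (i,Suc m) * x $ Suc m) / x $ 0" if "i < Suc p" for i
    by (rule first_col_of_mult_mat_vec_zero[OF N x(1,2) x(3) that])
  have P_col0: "P $$ (i,0) = 0" if "i < Suc p" for i
    using that M unfolding P_def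
    by (cases i) (simp_all add: index_Bmat_mult_first_row[OF X] index_Bmat_mult_Suc_row[OF X] index_corner_diag)
  have P_colS: "P $$ (i,Suc b) = N $$ (i,Suc b)" if "i < Suc p" "b < p" for i b
  proof (cases i)
    case 0
    then show ?thesis
      using that M w(1) col[of "Suc b"] unfolding P_def
      by (simp add: index_Bmat_mult_first_row[OF X] index_corner_diag MN sum_divide_distrib field_simps)
  next
    case (Suc a)
    then show ?thesis
      using that M unfolding P_def by (simp add: index_Bmat_mult_Suc_row[OF X] index_corner_diag MN)
  qed
  show ?thesis
    unfolding M_def[symmetric] P_def[symmetric]
  proof (rule eq_matI)
    fix i j assume "i < dim_row (P * Amat (Suc p) (vec (Suc p) (\<lambda>i. x $ 0 / x $ i)))"
      "j < dim_col (P * Amat (Suc p) (vec (Suc p) (\<lambda>i. x $ 0 / x $ i)))"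
    then have i: "i < Suc p" and j: "j < Suc p" using P by (auto simp: Amat_def)
    show "N $$ (i, j) = (P * Amat (Suc p) (vec (Suc p) (\<lambda>i. x $ 0 / x $ i))) $$ (i, j)"
    proof (cases j)
      case 0
      then show ?thesis
        using i x(1) row[OF i]
        by (simp add: index_mult_Amat_first_col[OF P] P_col0 P_colS sum_divide_distrib field_simps)
    next
      case (Suc b)
      then show ?thesis using i j by (simp add: index_mult_Amat_Suc_col[OF P] P_colS)
    qed
  qed (use P N in \<open>auto simp: Amat_def\<close>)
qed

lemma det_mat_delete_nonzero:
  fixes N :: "complex mat"
  assumes N: "N \<in> carrier_mat (Suc p) (Suc p)"
    and x: "dim_vec x = Suc p" "x $ 0 \<noteq> 0"
    and ker: "\<And>y. dim_vec y = Suc p \<Longrightarrow> N *\<^sub>v y = 0\<^sub>v (Suc p) \<Longrightarrow> \<exists>c. y = c \<cdot>\<^sub>v x"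
    and w: "dim_vec w = Suc p" "w $ 0 \<noteq> 0" "transpose_mat N *\<^sub>v w = 0\<^sub>v (Suc p)"
  shows "det (mat_delete N 0 0) \<noteq> 0"
proof
  have M: "mat_delete N 0 0 \<in> carrier_mat p p" using mat_delete_carrier[OF N] by simp
  assume "det (mat_delete N 0 0) = 0"
  then obtain y where y: "y \<in> carrier_vec p" "y \<noteq> 0\<^sub>v p" "mat_delete N 0 0 *\<^sub>v y = 0\<^sub>v p"
    using det_0_iff_vec_prod_zero[OF M] by auto
  define z where "z = vec (Suc p) (\<lambda>i. if i = 0 then 0 else y $ (i - 1))"
  have z: "z \<in> carrier_vec (Suc p)" and dz: "dim_vec z = Suc p" by (simp_all add: z_def)
  have Nz_Suc: "(N *\<^sub>v z) $ Suc a = 0" if "a < p" for a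
  proof -
    have "(N *\<^sub>v z) $ Suc a = (\<Sum>m<p. N $$ (Suc a, Suc m) * y $ m)"
      using index_mult_mat_vec_split_first[OF N _ Suc_mono[OF that], of z] by (simp add: z_def)
    also have "\<dots> = (mat_delete N 0 0 *\<^sub>v y) $ a"
      using that y(1) N by (simp add: mat_delete_def scalar_prod_def atLeast0LessThan)
    finally have "(N *\<^sub>v z) $ Suc a = (mat_delete N 0 0 *\<^sub>v y) $ a" .
    with y(3) that show ?thesis by simp
  qed
  \<comment> \<open>the first entry vanishes too, since w is orthogonal to the image of N\<close>
  have "w $ 0 * (N *\<^sub>v z) $ 0 = w \<bullet> (N *\<^sub>v z)"
    using N w(1) Nz_Suc by (simp add: scalar_prod_def atLeast0LessThan sum.lessThan_Suc_shift
        del: sum.lessThan_Suc)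
  also have "\<dots> = (transpose_mat N *\<^sub>v w) \<bullet> z"
    by (rule transpose_vec_mult_scalar[OF N z carrier_vecI[OF w(1)], symmetric])
  also have "\<dots> = 0" unfolding w(3) using z by (rule scalar_prod_left_zero)
  finally have "(N *\<^sub>v z) $ 0 = 0" using w(2) by simp
  then have "N *\<^sub>v z = 0\<^sub>v (Suc p)"
    using Nz_Suc N by (intro eq_vecI) (auto simp: less_Suc_eq_0_disj)
  then obtain c where zc: "z = c \<cdot>\<^sub>v x" using ker[OF dz] by blast
  have c: "c = 0" using arg_cong[OF zc, of "\<lambda>u. u $ 0"] x by (simp add: z_def)
  have "y = 0\<^sub>v p"
  proof (rule eq_vecI)
    fix a assume a: "a < dim_vec (0\<^sub>v p :: complex vec)"
    then have "y $ a = z $ Suc a" by (simp add: z_def)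
    also have "\<dots> = 0" using zc c x a by simp
    finally show "y $ a = 0\<^sub>v p $ a" using a by simp
  qed (use y(1) in simp)
  with y(2) show False ..
qed

lemma minv_det_nonzero:
  assumes F: "F \<in> carrier_mat n n" and d: "det F \<noteq> 0"
  shows "minv F \<in> carrier_mat n n" and "F * minv F = 1\<^sub>m n"
  using adj_mat[OF F] mult_smult_distrib[OF F adj_mat(1)[OF F], of "1 / det F"] d
  by (auto simp: minv_eq_adj_mat[OF F d] intro!: eq_matI)

lemma smult_corner_diag_zero:
  assumes Y: "Y \<in> carrier_mat p p"
  shows "c \<cdot>\<^sub>m corner_diag 0 Y = corner_diag 0 (c \<cdot>\<^sub>m Y)"
proof -
  have cY: "c \<cdot>\<^sub>m Y \<in> carrier_mat p p" using Y by simp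
  show ?thesis
    using Y by (intro eq_matI) (auto simp: index_corner_diag[OF Y] index_corner_diag[OF cY])
qed

lemma obtain_admissible_with_minv_vprime:
  assumes M: "M \<in> carrier_mat p p" and dM: "det M \<noteq> 0" and p: "p \<ge> 1"
    and l: "dim_vec l = Suc p" "l $ 0 = 1" and n: "dim_vec n = Suc p" "n $ 0 = 1"
    and nz: "\<forall>i<Suc p. l $ i \<noteq> 0 \<and> n $ i \<noteq> 0"
  obtains v k k' c where "admissible (Suc p) l n v k k'" "c \<noteq> 0"
    "minv (vprime (Suc p) l n v) = (1 / c) \<cdot>\<^sub>m M"
proof -
  define Y where "Y = minv M"
  note Y = minv_det_nonzero[OF M dM, folded Y_def]
  obtain a b where ab: "a < p" "b < p" "Y $$ (a,b) \<noteq> 0"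
    using inverse_has_nonzero_entry[OF M Y(1) Y(2)] p by auto
  have lab: "l $ Suc a \<noteq> 0" "n $ Suc b \<noteq> 0" using nz ab by auto
  \<comment> \<open>c is chosen so that the (a+1, b+1) entry of v is 1\<close>
  define c where "c = - 1 / (Y $$ (a,b) * (l $ Suc a)^2 * (n $ Suc b)^2)"
  have c: "c \<noteq> 0" using ab(3) lab by (simp add: c_def)
  define v where "v = mat (Suc p) (Suc p) (\<lambda>(i,j).
      if i = 0 \<or> j = 0 then 0 else - c * Y $$ (i-1,j-1) * (l $ i)^2 * (n $ j)^2)"
  have vp: "vprime (Suc p) l n v = c \<cdot>\<^sub>m Y"
    using Y(1) nz by (intro eq_matI) (auto simp: vprime_def v_def field_simps)
  have cY: "c \<cdot>\<^sub>m Y \<in> carrier_mat p p" and cM: "(1 / c) \<cdot>\<^sub>m M \<in> carrier_mat p p"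
    using Y(1) M by auto
  have inv: "(c \<cdot>\<^sub>m Y) * ((1 / c) \<cdot>\<^sub>m M) = 1\<^sub>m p"
    using mat_mult_left_right_inverse[OF M Y(1,2)] mult_smult_assoc_mat[OF Y(1) cM]
      mult_smult_distrib[OF Y(1) M] c
    by (auto intro!: eq_matI)
  have "admissible (Suc p) l n v (Suc a) (Suc b)"
    unfolding admissible_def
    using l n nz ab lab invertible_mat_if_right_inverse[OF cY cM inv, folded vp]
    by (auto simp: v_def c_def field_simps)
  moreover have "minv (vprime (Suc p) l n v) = (1 / c) \<cdot>\<^sub>m M"
    unfolding vp by (rule minv_eqI[OF cY cM inv])
  ultimately show ?thesis using c that by blast
qed

lemma smult_KZ1_val:
  assumes "minv (vprime (Suc p) l n v) = (1 / c) \<cdot>\<^sub>m M" and M: "M \<in> carrier_mat p p" and c: "c \<noteq> 0"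
  shows "c \<cdot>\<^sub>m KZ1_val (Suc p) l n v = Bmat (Suc p) n * corner_diag 0 M * Amat (Suc p) l"
proof -
  have cM: "(1 / c) \<cdot>\<^sub>m M \<in> carrier_mat p p" using M by simp
  note X = corner_diag_carrier[OF cM, of 0]
  have "c \<cdot>\<^sub>m KZ1_val (Suc p) l n v = Bmat (Suc p) n * (c \<cdot>\<^sub>m corner_diag 0 ((1 / c) \<cdot>\<^sub>m M)) * Amat (Suc p) l"
    unfolding KZ1_val_eq_corner_diag[OF cM[folded assms(1)]] assms(1)
    using mult_smult_assoc_mat[OF mult_carrier_mat[OF Bmat_carrier X] Amat_carrier]
      mult_smult_distrib[OF Bmat_carrier X] by simp
  also have "c \<cdot>\<^sub>m corner_diag 0 ((1 / c) \<cdot>\<^sub>m M) = corner_diag 0 M"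
    using smult_corner_diag_zero[OF cM, of c] M c by (auto intro!: arg_cong[of _ _ "corner_diag 0"] eq_matI)
  finally show ?thesis .
qed

lemma ex_admissible_smult_KZ1_val:
  fixes N :: "complex mat"
  assumes p: "p \<ge> 1" and N: "N \<in> carrier_mat (Suc p) (Suc p)"
    and x: "dim_vec x = Suc p" "\<forall>i<Suc p. x $ i \<noteq> 0" "N *\<^sub>v x = 0\<^sub>v (Suc p)"
    and ker: "\<And>y. dim_vec y = Suc p \<Longrightarrow> N *\<^sub>v y = 0\<^sub>v (Suc p) \<Longrightarrow> \<exists>c. y = c \<cdot>\<^sub>v x"
    and w: "dim_vec w = Suc p" "\<forall>i<Suc p. w $ i \<noteq> 0" "transpose_mat N *\<^sub>v w = 0\<^sub>v (Suc p)"
  shows "\<exists>l n v k k' c. admissible (Suc p) l n v k k' \<and> c \<noteq> 0 \<and> N = c \<cdot>\<^sub>m KZ1_val (Suc p) l n v"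
proof -
  define l where "l = vec (Suc p) (\<lambda>i. x $ 0 / x $ i)"
  define n where "n = vec (Suc p) (\<lambda>i. w $ 0 / w $ i)"
  define M where "M = mat_delete N 0 0"
  have M: "M \<in> carrier_mat p p" unfolding M_def using mat_delete_carrier[OF N] by simp
  have x0: "x $ 0 \<noteq> 0" and w0: "w $ 0 \<noteq> 0" using x(2) w(2) by auto
  have "det M \<noteq> 0" unfolding M_def using det_mat_delete_nonzero[OF N x(1) x0 ker w(1) w0 w(3)] .
  moreover have "dim_vec l = Suc p" "l $ 0 = 1" "dim_vec n = Suc p" "n $ 0 = 1"
    using x0 w0 by (simp_all add: l_def n_def)
  moreover have "\<forall>i<Suc p. l $ i \<noteq> 0 \<and> n $ i \<noteq> 0" using x(2) w(2) by (simp add: l_def n_def)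
  ultimately obtain v k k' c where adm: "admissible (Suc p) l n v k k'" and c: "c \<noteq> 0"
    and inv: "minv (vprime (Suc p) l n v) = (1 / c) \<cdot>\<^sub>m M"
    using obtain_admissible_with_minv_vprime[OF M _ p] by metis
  have "N = c \<cdot>\<^sub>m KZ1_val (Suc p) l n v"
    unfolding smult_KZ1_val[OF inv M c]
    using factor_through_corner_diag[OF N x(1) x0 x(3) w(1) w0 w(3), folded l_def n_def M_def] .
  with adm c show ?thesis by blast
qed

lemma admissible_chart_limit:
  assumes adm: "admissible (Suc p) l n v k k'" and p: "p \<ge> 1"
  shows "(\<forall>\<^sub>F s in at 0. invertible_mat (Jmap (pi1 s l n v))) \<and>
    (\<forall>i<Suc p. \<forall>j<Suc p.
       ((\<lambda>s. s * Kmap (pi1 s l n v) $$ (i,j)) \<longlongrightarrow> KZ1_val (Suc p) l n v $$ (i,j)) (at 0)) \<and>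
    KZ1_val (Suc p) l n v \<noteq> 0\<^sub>m (Suc p) (Suc p) \<and> det (KZ1_val (Suc p) l n v) = 0"
proof (intro conjI allI impI)
  show "\<forall>\<^sub>F s in at 0. invertible_mat (Jmap (pi1 s l n v))"
    using eventually_chart_regular[OF adm] by eventually_elim (auto intro: Kmap_pi1_eq(1)[OF adm])
qed (use tendsto_smult_Kmap_pi1[OF adm] KZ1_val_nonzero[OF adm p] det_KZ1_val[OF adm] in auto)

theorem proposition2p1:
  fixes q :: nat
  assumes "q \<ge> 2"
  shows
    "(\<forall>l n v k k'. admissible q l n v k k' \<longrightarrow>
        (\<forall>\<^sub>F s in at (0::complex). invertible_mat (Jmap (pi1 s l n v))) \<and>
        (\<forall>i<q. \<forall>j<q. ((\<lambda>s. s * Kmap (pi1 s l n v) $$ (i,j)) \<longlongrightarrow> KZ1_val q l n v $$ (i,j)) (at 0)) \<and>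
        KZ1_val q l n v \<noteq> 0\<^sub>m q q \<and> det (KZ1_val q l n v) = 0)
   \<and> (\<forall>N \<in> carrier_mat q q.
        (\<exists>x. dim_vec x = q \<and> (\<forall>i<q. x $ i \<noteq> 0) \<and> N *\<^sub>v x = 0\<^sub>v q \<and>
             (\<forall>y. dim_vec y = q \<and> N *\<^sub>v y = 0\<^sub>v q \<longrightarrow> (\<exists>c. y = c \<cdot>\<^sub>v x))) \<and>
        (\<exists>w. dim_vec w = q \<and> (\<forall>i<q. w $ i \<noteq> 0) \<and> transpose_mat N *\<^sub>v w = 0\<^sub>v q)
        \<longrightarrow> (\<exists>l n v k k' c. admissible q l n v k k' \<and> c \<noteq> 0 \<and> N = c \<cdot>\<^sub>m KZ1_val q l n v))"
proof -
  define p where "p = q - 1"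
  have q: "q = Suc p" and p: "p \<ge> 1" using assms by (auto simp: p_def)
  show ?thesis
    unfolding q using admissible_chart_limit[OF _ p]
    by (intro conjI allI ballI impI) (blast intro: ex_admissible_smult_KZ1_val[OF p])+
qed

end
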